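(* Let ${\tt G}$ be a digraph and let $P$ be a downward closed (or upward closed) sub-poset of $SSG({\tt G})$. Then any two sign assignments $\epsilon,\epsilon'$ on $P$ are isomorphic, i.e. there is $\eta\colon P\to\mathbb Z_2$ with $\eta(x)+\epsilon'_{x,y}\equiv\epsilon_{x,y}+\eta(y)\pmod 2$ for every covering pair $x\,\tilde\triangleleft\,y$ in $P$.
   Context: A digraph ${\tt G}=(V,E)$ has finite $V$ and $E\subseteq(V\times V)\setminus\{(v,v)\}$. $SSG({\tt G})$ is the poset of spanning subgraphs of ${\tt G}$ (all vertices, any subset of edges) ordered by inclusion of edge sets. A sub-poset $P$ (with induced order) is downward closed if $h\le h'$ with $h'\in P$ implies $h\in P$, and upward closed if $h'\le h$ with $h'\in P$ implies $h\in P$. In a poset, $x\,\tilde\triangleleft\,y$ ($y$ covers $x$) means $x<y$ with nothing strictly between; a square is $x,y,y',z$ with $y\neq y'$, $x\,\tilde\triangleleft\,y\,\tilde\triangleleft\,z$, $x\,\tilde\triangleleft\,y'\,\tilde\triangleleft\,z$. A sign assignment assigns $\epsilon_{x,y}\in\mathbb Z_2$ to each covering pair such that $\epsilon_{x,y}+\epsilon_{y,z}\equiv\epsilon_{x,y'}+\epsilon_{y',z}+1\pmod 2$ for every square. *)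

theory Defs
  imports Main "HOL-Library.Z2"
begin

definition digraph :: "'a set \<Rightarrow> ('a \<times> 'a) set \<Rightarrow> bool" where
  "digraph V E \<longleftrightarrow> finite V \<and> E \<subseteq> (V \<times> V) - {(v, v) | v. True}"

text \<open>SSG(G): spanning subgraphs (V, H) with H \<subseteq> E, identified with their edge sets H,
  ordered by inclusion. Its carrier is Pow E.\<close>
definition SSG :: "'a set \<Rightarrow> ('a \<times> 'a) set \<Rightarrow> ('a \<times> 'a) set set" where
  "SSG V E = Pow E"

definition downward_closed :: "'b set set \<Rightarrow> 'b set set \<Rightarrow> bool" where
  "downward_closed Q P \<longleftrightarrow> P \<subseteq> Q \<and> (\<forall>h \<in> Q. \<forall>h' \<in> P. h \<subseteq> h' \<longrightarrow> h \<in> P)"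

definition upward_closed :: "'b set set \<Rightarrow> 'b set set \<Rightarrow> bool" where
  "upward_closed Q P \<longleftrightarrow> P \<subseteq> Q \<and> (\<forall>h \<in> Q. \<forall>h' \<in> P. h' \<subseteq> h \<longrightarrow> h \<in> P)"

definition covers :: "'b set set \<Rightarrow> 'b set \<Rightarrow> 'b set \<Rightarrow> bool" where
  "covers P x y \<longleftrightarrow> x \<in> P \<and> y \<in> P \<and> x \<subset> y \<and> \<not> (\<exists>w \<in> P. x \<subset> w \<and> w \<subset> y)"

definition is_square :: "'b set set \<Rightarrow> 'b set \<Rightarrow> 'b set \<Rightarrow> 'b set \<Rightarrow> 'b set \<Rightarrow> bool" where
  "is_square P x y y' z \<longleftrightarrow> y \<noteq> y' \<and> covers P x y \<and> covers P y z \<and> covers P x y' \<and> covers P y' z"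

text \<open>Sign assignment: values in Z2 (type bit) on covering pairs; values on
  non-covering pairs are irrelevant.\<close>
definition sign_assignment :: "'b set set \<Rightarrow> ('b set \<Rightarrow> 'b set \<Rightarrow> bit) \<Rightarrow> bool" where
  "sign_assignment P \<epsilon> \<longleftrightarrow>
     (\<forall>x y y' z. is_square P x y y' z \<longrightarrow> \<epsilon> x y + \<epsilon> y z = \<epsilon> x y' + \<epsilon> y' z + 1)"

definition iso_sign_assignments :: "'b set set \<Rightarrow> ('b set \<Rightarrow> 'b set \<Rightarrow> bit) \<Rightarrow> ('b set \<Rightarrow> 'b set \<Rightarrow> bit) \<Rightarrow> bool" where
  "iso_sign_assignments P \<epsilon> \<epsilon>' \<longleftrightarrow>
     (\<exists>\<eta> :: 'b set \<Rightarrow> bit. \<forall>x y. covers P x y \<longrightarrow> \<eta> x + \<epsilon>' x y = \<epsilon> x y + \<eta> y)"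

end

theory Submission imports Defs begin

text \<open>The difference \<open>\<epsilon>' - \<epsilon>\<close> of two sign assignments commutes around every square, i.e. it is
  a 1-cocycle, and an isomorphism \<open>\<eta>\<close> is exactly a potential for it. In a downward closed family
  of edge sets the covering pairs are the removals of a single edge, so a potential is obtained
  by summing the cocycle along the chain that deletes the edges of a subgraph in a fixed order;
  commutativity of the squares makes this independent of which edge is deleted first. The upward
  closed case reduces to the downward closed one by taking complements in \<open>E\<close>.\<close>

definition is_cocycle :: "'b set set \<Rightarrow> ('b set \<Rightarrow> 'b set \<Rightarrow> 'g::plus) \<Rightarrow> bool" where
  "is_cocycle P d \<longleftrightarrow> (\<forall>x y y' z. is_square P x y y' z \<longrightarrow> d x y + d y z = d x y' + d y' z)"

definition is_coboundary :: "'b set set \<Rightarrow> ('b set \<Rightarrow> 'b set \<Rightarrow> 'g::plus) \<Rightarrow> bool" where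
  "is_coboundary P d \<longleftrightarrow> (\<exists>\<eta>. \<forall>x y. covers P x y \<longrightarrow> \<eta> y = \<eta> x + d x y)"

lemma sign_assignment_diff_is_cocycle:
  assumes "sign_assignment P \<epsilon>" and "sign_assignment P \<epsilon>'"
  shows "is_cocycle P (\<lambda>x y. \<epsilon>' x y - \<epsilon> x y)"
  unfolding is_cocycle_def
proof (intro allI impI)
  fix x y y' z assume "is_square P x y y' z"
  then have sq: "\<epsilon> x y + \<epsilon> y z = \<epsilon> x y' + \<epsilon> y' z + 1"
    and sq': "\<epsilon>' x y + \<epsilon>' y z = \<epsilon>' x y' + \<epsilon>' y' z + 1"
    using assms unfolding sign_assignment_def by blast+
  have "\<epsilon>' x y - \<epsilon> x y + (\<epsilon>' y z - \<epsilon> y z) = (\<epsilon>' x y + \<epsilon>' y z) - (\<epsilon> x y + \<epsilon> y z)"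
    by (simp only: algebra_simps)
  also have "\<dots> = (\<epsilon>' x y' + \<epsilon>' y' z + 1) - (\<epsilon> x y' + \<epsilon> y' z + 1)"
    by (simp only: sq sq')
  also have "\<dots> = \<epsilon>' x y' - \<epsilon> x y' + (\<epsilon>' y' z - \<epsilon> y' z)"
    by (simp only: algebra_simps)
  finally show "\<epsilon>' x y - \<epsilon> x y + (\<epsilon>' y z - \<epsilon> y z) =
      \<epsilon>' x y' - \<epsilon> x y' + (\<epsilon>' y' z - \<epsilon> y' z)" .
qed

lemma downward_closed_subset:
  assumes "downward_closed (Pow E) P" and "y \<in> P" and "x \<subseteq> y"
  shows "x \<in> P"
proof -
  have "y \<subseteq> E" using assms(1,2) unfolding downward_closed_def by blast
  then show ?thesis using assms unfolding downward_closed_def by blast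
qed

lemma covers_Diff_singleton:
  assumes "downward_closed (Pow E) P" and "y \<in> P" and "e \<in> y"
  shows "covers P (y - {e}) y"
proof -
  have "y - {e} \<in> P" using downward_closed_subset[OF assms(1,2)] by blast
  moreover have "\<not> (\<exists>w \<in> P. y - {e} \<subset> w \<and> w \<subset> y)" using assms(3) by blast
  ultimately show ?thesis using assms(2,3) unfolding covers_def by blast
qed

lemma covers_imp_Diff_singleton:
  assumes "downward_closed (Pow E) P" and "covers P x y"
  obtains e where "e \<in> y" and "x = y - {e}"
proof -
  from assms(2) have "y \<in> P" "x \<subset> y" and no_between: "\<not> (\<exists>w \<in> P. x \<subset> w \<and> w \<subset> y)"
    unfolding covers_def by auto
  then obtain e where e: "e \<in> y" "e \<notin> x" by blast
  have "insert e x \<in> P"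
    using downward_closed_subset[OF assms(1) \<open>y \<in> P\<close>] \<open>x \<subset> y\<close> e(1) by blast
  then have "insert e x = y" using no_between \<open>x \<subset> y\<close> e by blast
  with e that show thesis by blast
qed

lemma is_square_Diff_two:
  assumes "downward_closed (Pow E) P" and "y \<in> P" and "a \<in> y" "e \<in> y" "a \<noteq> e"
  shows "is_square P (y - {a, e}) (y - {e}) (y - {a}) y"
proof -
  have P: "y - {e} \<in> P" "y - {a} \<in> P" using downward_closed_subset[OF assms(1,2)] by auto
  have "y - {e} - {a} = y - {a, e}" "y - {a} - {e} = y - {a, e}" by auto
  then have "covers P (y - {a, e}) (y - {e})" "covers P (y - {a, e}) (y - {a})"
    using covers_Diff_singleton[OF assms(1) P(1), of a] covers_Diff_singleton[OF assms(1) P(2), of e]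
      assms(3-5) by auto
  moreover have "covers P (y - {e}) y" "covers P (y - {a}) y"
    using covers_Diff_singleton[OF assms(1,2)] assms(3,4) by auto
  moreover have "y - {e} \<noteq> y - {a}" using assms(3-5) by blast
  ultimately show ?thesis unfolding is_square_def by blast
qed

primrec chain_potential :: "('b set \<Rightarrow> 'b set \<Rightarrow> 'g::comm_monoid_add) \<Rightarrow> 'b list \<Rightarrow> 'b set \<Rightarrow> 'g" where
  "chain_potential d [] y = 0"
| "chain_potential d (a # es) y =
     (if a \<in> y then chain_potential d es (y - {a}) + d (y - {a}) y else chain_potential d es y)"

lemma chain_potential_Diff_singleton:
  fixes d :: "'b set \<Rightarrow> 'b set \<Rightarrow> 'g::comm_monoid_add"
  assumes "downward_closed (Pow E) P" and "is_cocycle P d"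
  shows "y \<in> P \<Longrightarrow> y \<subseteq> set es \<Longrightarrow> e \<in> y \<Longrightarrow>
    chain_potential d es y = chain_potential d es (y - {e}) + d (y - {e}) y"
proof (induction es arbitrary: y)
  case Nil
  then show ?case by simp
next
  case (Cons a es)
  consider "a \<notin> y" | "a = e" | "a \<in> y" "a \<noteq> e" by blast
  then show ?case
  proof cases
    case 1
    then show ?thesis using Cons by auto
  next
    case 2
    then show ?thesis using Cons.prems by simp
  next
    case 3
    have "y - {a} \<in> P" using downward_closed_subset[OF assms(1) Cons.prems(1)] by blast
    moreover have "y - {a} \<subseteq> set es" "e \<in> y - {a}" using Cons.prems(2,3) 3 by auto
    moreover have "y - {a} - {e} = y - {a, e}" by auto
    ultimately have IH: "chain_potential d es (y - {a}) =
        chain_potential d es (y - {a, e}) + d (y - {a, e}) (y - {a})"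
      using Cons.IH by metis
    have "d (y - {a, e}) (y - {e}) + d (y - {e}) y = d (y - {a, e}) (y - {a}) + d (y - {a}) y"
      using assms(2) is_square_Diff_two[OF assms(1) Cons.prems(1) 3(1) Cons.prems(3) 3(2)]
      unfolding is_cocycle_def by blast
    moreover have "y - {e} - {a} = y - {a, e}" by auto
    ultimately show ?thesis using 3 IH by (simp add: add.assoc)
  qed
qed

lemma downward_closed_cocycle_is_coboundary:
  fixes d :: "'b set \<Rightarrow> 'b set \<Rightarrow> 'g::comm_monoid_add"
  assumes "downward_closed (Pow E) P" and "finite E" and "is_cocycle P d"
  shows "is_coboundary P d"
proof -
  obtain es where es: "set es = E" using finite_list[OF assms(2)] by blast
  have "chain_potential d es y = chain_potential d es x + d x y" if xy: "covers P x y" for x y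
  proof -
    obtain e where "e \<in> y" "x = y - {e}"
      using covers_imp_Diff_singleton[OF assms(1) xy] by blast
    moreover have "y \<in> P" "y \<subseteq> set es"
      using xy assms(1) es unfolding covers_def downward_closed_def by auto
    ultimately show ?thesis using chain_potential_Diff_singleton[OF assms(1,3)] by blast
  qed
  then show ?thesis unfolding is_coboundary_def by blast
qed

lemma covers_image_Diff_iff:
  assumes "P \<subseteq> Pow E"
  shows "covers ((-) E ` P) a b \<longleftrightarrow> a \<subseteq> E \<and> b \<subseteq> E \<and> covers P (E - b) (E - a)"
proof -
  have mem: "h \<in> (-) E ` P \<longleftrightarrow> h \<subseteq> E \<and> E - h \<in> P" for h
  proof
    assume "h \<in> (-) E ` P"
    then obtain g where "g \<in> P" "h = E - g" by blast
    moreover from this have "E - h = g" using assms by (auto simp: double_diff)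
    ultimately show "h \<subseteq> E \<and> E - h \<in> P" by simp
  next
    assume "h \<subseteq> E \<and> E - h \<in> P"
    then have "h = E - (E - h)" "E - h \<in> P" by (auto simp: double_diff)
    then show "h \<in> (-) E ` P" by blast
  qed
  have anti: "E - h \<subset> E - h' \<longleftrightarrow> h' \<subset> h" if "h \<subseteq> E" "h' \<subseteq> E" for h h'
    using that by blast
  have between: "(\<exists>w \<in> (-) E ` P. a \<subset> w \<and> w \<subset> b) \<longleftrightarrow> (\<exists>w \<in> P. E - b \<subset> w \<and> w \<subset> E - a)"
    if "a \<subseteq> E" "b \<subseteq> E"
  proof
    assume "\<exists>w \<in> (-) E ` P. a \<subset> w \<and> w \<subset> b"
    then obtain w where w: "w \<subseteq> E" "E - w \<in> P" "a \<subset> w" "w \<subset> b" using mem by blast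
    then have "E - b \<subset> E - w" "E - w \<subset> E - a" using anti that by simp_all
    with w(2) show "\<exists>w \<in> P. E - b \<subset> w \<and> w \<subset> E - a" by blast
  next
    assume "\<exists>w \<in> P. E - b \<subset> w \<and> w \<subset> E - a"
    then obtain w where w: "w \<in> P" "E - b \<subset> w" "w \<subset> E - a" by blast
    then have "w \<subseteq> E" using assms by blast
    then have "E - w \<in> (-) E ` P" "a \<subset> E - w" "E - w \<subset> b"
      using w anti[of b "E - w"] anti[of "E - w" a] that by (simp_all add: double_diff)
    then show "\<exists>w \<in> (-) E ` P. a \<subset> w \<and> w \<subset> b" by blast
  qed
  show ?thesis
  proof (cases "a \<subseteq> E \<and> b \<subseteq> E")
    case True
    then show ?thesis
      unfolding covers_def using mem anti between by (simp add: conj_commute conj_left_commute)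
  next
    case False
    then show ?thesis unfolding covers_def using mem by blast
  qed
qed

lemma upward_closed_image_Diff:
  assumes "upward_closed (Pow E) P"
  shows "downward_closed (Pow E) ((-) E ` P)"
  unfolding downward_closed_def
proof (intro conjI ballI impI)
  show "(-) E ` P \<subseteq> Pow E" by blast
next
  fix h h' assume "h \<in> Pow E" "h' \<in> (-) E ` P" "h \<subseteq> h'"
  then obtain g where "g \<in> P" "h' = E - g" by blast
  moreover from this have "g \<subseteq> E" using assms unfolding upward_closed_def by blast
  ultimately have "g \<in> P" "g \<subseteq> E - h" using \<open>h \<subseteq> h'\<close> by blast+
  then have "E - h \<in> P" using assms unfolding upward_closed_def by blast
  moreover have "h = E - (E - h)" using \<open>h \<in> Pow E\<close> by (auto simp: double_diff)
  ultimately show "h \<in> (-) E ` P" by blast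
qed

lemma is_cocycle_image_Diff:
  fixes d :: "'b set \<Rightarrow> 'b set \<Rightarrow> 'g::ab_semigroup_add"
  assumes "P \<subseteq> Pow E" and "is_cocycle P d"
  shows "is_cocycle ((-) E ` P) (\<lambda>a b. d (E - b) (E - a))"
  unfolding is_cocycle_def
proof (intro allI impI)
  fix a b b' c assume "is_square ((-) E ` P) a b b' c"
  then have "b \<noteq> b'" "covers ((-) E ` P) a b" "covers ((-) E ` P) b c"
    "covers ((-) E ` P) a b'" "covers ((-) E ` P) b' c"
    unfolding is_square_def by blast+
  then have "b \<subseteq> E" "b' \<subseteq> E" "b \<noteq> b'"
    and "covers P (E - b) (E - a)" "covers P (E - c) (E - b)"
    and "covers P (E - b') (E - a)" "covers P (E - c) (E - b')"
    unfolding covers_image_Diff_iff[OF assms(1)] by simp_all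
  moreover from this(1-3) have "E - b \<noteq> E - b'" by blast
  ultimately have "is_square P (E - c) (E - b) (E - b') (E - a)"
    unfolding is_square_def by simp
  then have "d (E - c) (E - b) + d (E - b) (E - a) = d (E - c) (E - b') + d (E - b') (E - a)"
    using assms(2) unfolding is_cocycle_def by blast
  then show "d (E - b) (E - a) + d (E - c) (E - b) = d (E - b') (E - a) + d (E - c) (E - b')"
    by (simp add: add.commute)
qed

lemma upward_closed_cocycle_is_coboundary:
  fixes d :: "'b set \<Rightarrow> 'b set \<Rightarrow> 'g::ab_group_add"
  assumes "upward_closed (Pow E) P" and "finite E" and "is_cocycle P d"
  shows "is_coboundary P d"
proof -
  have PE: "P \<subseteq> Pow E" using assms(1) unfolding upward_closed_def by blast
  obtain \<eta> where \<eta>: "\<And>a b. covers ((-) E ` P) a b \<Longrightarrow> \<eta> b = \<eta> a + d (E - b) (E - a)"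
    using downward_closed_cocycle_is_coboundary[OF upward_closed_image_Diff[OF assms(1)] assms(2)
        is_cocycle_image_Diff[OF PE assms(3)]]
    unfolding is_coboundary_def by blast
  define \<eta>' where "\<eta>' h = - \<eta> (E - h)" for h
  have "\<forall>x y. covers P x y \<longrightarrow> \<eta>' y = \<eta>' x + d x y"
  proof (intro allI impI)
    fix x y assume xy: "covers P x y"
    then have "x \<subseteq> E" "y \<subseteq> E" using PE unfolding covers_def by auto
    then have "\<eta> (E - x) = \<eta> (E - y) + d x y"
      using \<eta> covers_image_Diff_iff[OF PE, of "E - y" "E - x"] xy by (simp add: double_diff)
    then show "\<eta>' y = \<eta>' x + d x y" unfolding \<eta>'_def by simp
  qed
  then show ?thesis unfolding is_coboundary_def by blast
qed

theorem theorem3p16: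
  fixes V :: "'a set" and E :: "('a \<times> 'a) set" and P :: "('a \<times> 'a) set set"
    and \<epsilon> \<epsilon>' :: "('a \<times> 'a) set \<Rightarrow> ('a \<times> 'a) set \<Rightarrow> bit"
  assumes "digraph V E"
    and "downward_closed (SSG V E) P \<or> upward_closed (SSG V E) P"
    and "sign_assignment P \<epsilon>" and "sign_assignment P \<epsilon>'"
  shows "iso_sign_assignments P \<epsilon> \<epsilon>'"
proof -
  have fin: "finite E"
  proof -
    have "E \<subseteq> V \<times> V" "finite V" using assms(1) unfolding digraph_def by auto
    then show ?thesis using finite_subset by blast
  qed
  have cocycle: "is_cocycle P (\<lambda>x y. \<epsilon>' x y - \<epsilon> x y)"
    using sign_assignment_diff_is_cocycle[OF assms(3,4)] .
  have "is_coboundary P (\<lambda>x y. \<epsilon>' x y - \<epsilon> x y)"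
    using assms(2) downward_closed_cocycle_is_coboundary[OF _ fin cocycle]
      upward_closed_cocycle_is_coboundary[OF _ fin cocycle]
    unfolding SSG_def by blast
  then obtain \<eta> where \<eta>: "\<And>x y. covers P x y \<Longrightarrow> \<eta> y = \<eta> x + (\<epsilon>' x y - \<epsilon> x y)"
    unfolding is_coboundary_def by blast
  have "\<eta> x + \<epsilon>' x y = \<epsilon> x y + \<eta> y" if "covers P x y" for x y
    unfolding \<eta>[OF that] by (simp only: algebra_simps)
  then show ?thesis unfolding iso_sign_assignments_def by blast
qed

end
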